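(* Let $K, L$ be compact convex subsets of $\mathbb{R}^n$, and let $d \geq 2$ (with $d\le n$). Suppose that for every $d$-dimensional linear subspace $\xi$ of $\mathbb{R}^n$, the projection $L_\xi$ contains a translate of $K_\xi$. If $K$ and $L$ have the same diameter, then $L$ contains a translate of $K$.
   Context: For a set $S\subseteq\mathbb{R}^n$ and a linear subspace $\xi$, $S_\xi$ denotes the orthogonal projection of $S$ onto $\xi$. *)

theory Defs
  imports "HOL-Analysis.Analysis"
begin

definition orth_proj :: "'a::euclidean_space set \<Rightarrow> 'a \<Rightarrow> 'a" where
  "orth_proj V x = (THE y. y \<in> V \<and> (\<forall>z\<in>V. (x - y) \<bullet> z = 0))"

definition proj_set :: "'a::euclidean_space set \<Rightarrow> 'a set \<Rightarrow> 'a set" where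
  "proj_set V S = orth_proj V ` S"

end

theory Submission
  imports Defs
begin

text \<open>Let a, b be a diametral pair of K, so u = a - b has length diam L. If \<xi> contains u and
  t + K_\<xi> \<subseteq> L_\<xi>, the points t + a_\<xi> and t + b_\<xi> lift to p, q \<in> L with
  (p - q) \<bullet> u = |u|^2, and the diameter bound forces p - q = u. Since L has at most one
  diametral chord in a given direction, p = p0 does not depend on \<xi>, so the translation t
  agrees with p0 - a on \<xi>. Were p0 - a + x \<notin> L for some x \<in> K, a hyperplane with normal c
  would separate it from L; projecting onto a \<xi> containing u and c (here d \<ge> 2 is used)
  gives a point of L with the same c-component, a contradiction.\<close>

lemma orth_proj_inner:
  fixes V :: "'a::euclidean_space set"
  assumes "subspace V" "v \<in> V"
  shows "orth_proj V x \<bullet> v = x \<bullet> v"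
proof -
  obtain y z where y: "y \<in> span V" and z: "\<And>w. w \<in> span V \<Longrightarrow> orthogonal z w"
    and xyz: "x = y + z"
    using orthogonal_subspace_decomp_exists by blast
  have span_V: "span V = V"
    using \<open>subspace V\<close> by (rule span_eq_iff[THEN iffD2])
  have y_orth: "y \<in> V \<and> (\<forall>w\<in>V. (x - y) \<bullet> w = 0)"
    using y z xyz unfolding span_V by (auto simp: orthogonal_def)
  have "y' = y" if y': "y' \<in> V \<and> (\<forall>w\<in>V. (x - y') \<bullet> w = 0)" for y'
  proof -
    have "y' - y \<in> V" using y' y_orth \<open>subspace V\<close> subspace_diff by blast
    then have "((x - y) - (x - y')) \<bullet> (y' - y) = 0"
      using y' y_orth by (simp add: inner_diff_left)
    then show ?thesis by simp
  qed
  then have "orth_proj V x = y"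
    unfolding orth_proj_def using y_orth by (intro the_equality) blast+
  then show ?thesis using y_orth \<open>v \<in> V\<close> by (auto simp: inner_diff_left)
qed

lemma subspace_of_dim_containing:
  fixes S :: "'a::euclidean_space set"
  assumes "dim S \<le> d" "d \<le> DIM('a)"
  obtains T where "subspace T" "dim T = d" "S \<subseteq> T"
proof -
  obtain I where I: "I \<subseteq> S" "independent I" "S \<subseteq> span I" "card I = dim S"
    by (rule basis_exists)
  obtain B where B: "I \<subseteq> B" "independent B" "UNIV \<subseteq> span B"
    by (rule maximal_independent_subset_extend[OF subset_UNIV I(2)]) blast
  have "card B = DIM('a)"
    using B dim_span_eq_card_independent[OF B(2)] by (simp add: top.extremum_unique)
  then obtain C where C: "I \<subseteq> C" "C \<subseteq> B" "card C = d"
    using exists_subset_between[of I d B] I(4) assms B(1) independent_bound[OF B(2)] by auto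
  have "independent C" using C(2) B(2) dependent_mono by blast
  then show thesis
    using that[of "span C"] dim_span_eq_card_independent C I span_mono[of I C] by force
qed

lemma two_vectors_in_subspace_of_dim:
  fixes u v :: "'a::euclidean_space"
  assumes "2 \<le> d" "d \<le> DIM('a)"
  obtains \<xi> where "subspace \<xi>" "dim \<xi> = d" "u \<in> \<xi>" "v \<in> \<xi>"
proof -
  have "dim {u, v} \<le> d"
    using dim_le_card'[of "{u, v}"] card_2_iff' assms(1) by (cases "u = v") auto
  then show thesis
    using subspace_of_dim_containing[of "{u, v}" d] assms that by auto
qed

lemma eq_if_norm_le_and_inner_eq:
  fixes w u :: "'a::real_inner"
  assumes "norm w \<le> norm u" "w \<bullet> u = u \<bullet> u"
  shows "w = u"
proof -
  have "w \<bullet> w \<le> u \<bullet> u"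
    using assms(1) by (simp add: power_mono flip: power2_norm_eq_inner)
  then have "(w - u) \<bullet> (w - u) \<le> 0"
    using assms(2) by (simp add: inner_diff_left inner_diff_right inner_commute)
  then have "(w - u) \<bullet> (w - u) = 0"
    by (meson inner_ge_zero order_antisym)
  then show ?thesis by simp
qed

lemma inner_diff_le_diameter_sq:
  fixes u :: "'a::real_inner"
  assumes "bounded L" "p \<in> L" "q \<in> L" "norm u = diameter L"
  shows "(p - q) \<bullet> u \<le> u \<bullet> u"
proof -
  have "(p - q) \<bullet> u \<le> norm (p - q) * norm u"
    by (rule norm_cauchy_schwarz)
  also have "\<dots> \<le> norm u * norm u"
    using diameter_bounded_bound[OF assms(1-3)] assms(4) norm_ge_zero[of u]
    by (intro mult_right_mono) (auto simp: dist_norm)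
  also have "\<dots> = u \<bullet> u"
    by (simp add: power2_norm_eq_inner[symmetric] power2_eq_square)
  finally show ?thesis .
qed

lemma diametral_chord_eqI:
  fixes u :: "'a::real_inner"
  assumes "bounded L" "p \<in> L" "q \<in> L" "norm u = diameter L" "(p - q) \<bullet> u = u \<bullet> u"
  shows "p - q = u"
proof (rule eq_if_norm_le_and_inner_eq)
  show "norm (p - q) \<le> norm u"
    using diameter_bounded_bound[OF assms(1-3)] assms(4) by (simp add: dist_norm)
qed (fact assms(5))

text \<open>The crossed chords p - q' and p' - q sum to 2u, while each has inner product at most
  u \<bullet> u with u; so p - q' = u as well.\<close>
lemma diametral_chord_unique:
  fixes u :: "'a::real_inner"
  assumes "bounded L" "p \<in> L" "q \<in> L" "p' \<in> L" "q' \<in> L"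
    and "p - q = u" "p' - q' = u" "norm u = diameter L"
  shows "p = p'"
proof -
  have "(p - q') \<bullet> u + (p' - q) \<bullet> u = ((p - q') + (p' - q)) \<bullet> u"
    by (simp only: inner_add_left)
  also have "\<dots> = ((p - q) + (p' - q')) \<bullet> u"
    by (rule arg_cong[where f = "\<lambda>w. w \<bullet> u"]) (simp add: algebra_simps)
  also have "\<dots> = u \<bullet> u + u \<bullet> u"
    by (simp only: assms(6,7) inner_add_left)
  finally have "(p - q') \<bullet> u = u \<bullet> u"
    using inner_diff_le_diameter_sq[OF assms(1), of p q' u]
      inner_diff_le_diameter_sq[OF assms(1), of p' q u] assms(2-5,8)
    by linarith
  then have "p - q' = p' - q'"
    using diametral_chord_eqI[OF assms(1,2,5,8)] assms(7) by simp
  then show ?thesis by simp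
qed

lemma diametral_chord_lift:
  fixes K L :: "'a::euclidean_space set"
  assumes "bounded L" "a \<in> K" "b \<in> K" "norm (a - b) = diameter L"
    and "subspace \<xi>" "a - b \<in> \<xi>"
    and "(\<lambda>x. t + x) ` proj_set \<xi> K \<subseteq> proj_set \<xi> L"
  obtains p q where "p \<in> L" "q \<in> L" "p - q = a - b" "orth_proj \<xi> p = t + orth_proj \<xi> a"
proof -
  obtain p where p: "p \<in> L" "t + orth_proj \<xi> a = orth_proj \<xi> p"
    using assms(2,7) unfolding proj_set_def by blast
  obtain q where q: "q \<in> L" "t + orth_proj \<xi> b = orth_proj \<xi> q"
    using assms(3,7) unfolding proj_set_def by blast
  have "(p - q) \<bullet> (a - b) = (orth_proj \<xi> p - orth_proj \<xi> q) \<bullet> (a - b)"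
    using orth_proj_inner[OF assms(5,6)] by (simp add: inner_diff_left)
  also have "\<dots> = (orth_proj \<xi> a - orth_proj \<xi> b) \<bullet> (a - b)"
    by (simp flip: p(2) q(2))
  also have "\<dots> = (a - b) \<bullet> (a - b)"
    using orth_proj_inner[OF assms(5,6)] by (simp add: inner_diff_left)
  finally have "p - q = a - b"
    using diametral_chord_eqI[OF assms(1) p(1) q(1) assms(4)] by blast
  with p q that show thesis by simp
qed

lemma translate_witness_on_subspace:
  fixes K L :: "'a::euclidean_space set"
  assumes "bounded L" "a \<in> K" "b \<in> K" "norm (a - b) = diameter L"
    and "p0 \<in> L" "q0 \<in> L" "p0 - q0 = a - b"
    and "subspace \<xi>" "a - b \<in> \<xi>"
    and "(\<lambda>x. t + x) ` proj_set \<xi> K \<subseteq> proj_set \<xi> L"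
    and "x \<in> K"
  shows "\<exists>y\<in>L. \<forall>v\<in>\<xi>. y \<bullet> v = (p0 - a + x) \<bullet> v"
proof -
  obtain p q where "p \<in> L" "q \<in> L" "p - q = a - b" and p: "orth_proj \<xi> p = t + orth_proj \<xi> a"
    using diametral_chord_lift[OF assms(1-4,8-10)] by blast
  then have "p = p0"
    using diametral_chord_unique[OF assms(1) _ _ assms(5,6) _ assms(7,4)] by blast
  then have t: "t \<bullet> v = (p0 - a) \<bullet> v" if "v \<in> \<xi>" for v
    using arg_cong[OF p, of "\<lambda>w. w \<bullet> v"] orth_proj_inner[OF assms(8) that]
    by (simp add: inner_add_left inner_diff_left)
  obtain y where y: "y \<in> L" "t + orth_proj \<xi> x = orth_proj \<xi> y"
    using assms(10,11) unfolding proj_set_def by blast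
  have "y \<bullet> v = (p0 - a + x) \<bullet> v" if "v \<in> \<xi>" for v
    using arg_cong[OF y(2), of "\<lambda>w. w \<bullet> v"] orth_proj_inner[OF assms(8) that] t[OF that]
    by (simp add: inner_add_left)
  with y(1) show ?thesis by blast
qed

theorem corollary2p7:
  fixes K L :: "(real ^ 'n) set" and d :: nat
  assumes "compact K" "convex K" "compact L" "convex L"
    and "2 \<le> d" "d \<le> CARD('n)"
    and "\<And>\<xi>. subspace \<xi> \<Longrightarrow> dim \<xi> = d \<Longrightarrow>
            (\<exists>t. (\<lambda>x. t + x) ` proj_set \<xi> K \<subseteq> proj_set \<xi> L)"
    and "diameter K = diameter L"
  shows "\<exists>t. (\<lambda>x. t + x) ` K \<subseteq> L"
proof (cases "K = {}")
  case False
  obtain a b where ab: "a \<in> K" "b \<in> K" "norm (a - b) = diameter L"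
    using diameter_compact_attained[OF assms(1) False] assms(8) by (auto simp: dist_norm)
  have "bounded L" using assms(3) by (rule compact_imp_bounded)
  have d_le_dim: "d \<le> DIM(real ^ 'n)" using assms(6) by simp
  have admissible: "\<exists>\<xi> t. subspace \<xi> \<and> a - b \<in> \<xi> \<and> c \<in> \<xi> \<and>
      (\<lambda>x. t + x) ` proj_set \<xi> K \<subseteq> proj_set \<xi> L" for c
  proof -
    obtain \<xi> where "subspace \<xi>" "dim \<xi> = d" "a - b \<in> \<xi>" "c \<in> \<xi>"
      by (rule two_vectors_in_subspace_of_dim[OF assms(5) d_le_dim])
    with assms(7) show ?thesis by blast
  qed
  then obtain \<xi>0 t0 where "subspace \<xi>0" "a - b \<in> \<xi>0"
      "(\<lambda>x. t0 + x) ` proj_set \<xi>0 K \<subseteq> proj_set \<xi>0 L"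
    by blast
  then obtain p0 q0 where p0: "p0 \<in> L" "q0 \<in> L" "p0 - q0 = a - b"
    by (rule diametral_chord_lift[OF \<open>bounded L\<close> ab])
  have "p0 - a + x \<in> L" if "x \<in> K" for x
  proof (rule ccontr)
    assume "p0 - a + x \<notin> L"
    then obtain c \<beta> where c: "c \<bullet> (p0 - a + x) < \<beta>" "\<forall>y\<in>L. \<beta> < c \<bullet> y"
      using separating_hyperplane_closed_point[OF assms(4) compact_imp_closed[OF assms(3)]] by blast
    obtain \<xi> t where "subspace \<xi>" "a - b \<in> \<xi>" "c \<in> \<xi>"
        "(\<lambda>x. t + x) ` proj_set \<xi> K \<subseteq> proj_set \<xi> L"
      using admissible by blast
    then obtain y where "y \<in> L" "y \<bullet> c = (p0 - a + x) \<bullet> c"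
      using translate_witness_on_subspace[OF \<open>bounded L\<close> ab p0 _ _ _ \<open>x \<in> K\<close>] by blast
    then have "\<beta> < c \<bullet> (p0 - a + x)"
      using c(2) by (metis inner_commute)
    with c(1) show False by simp
  qed
  then show ?thesis by blast
qed simp

end
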